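(* Define $A_{2}=\frac{1}{\sqrt2}\begin{bmatrix}1&1\\1&-1\end{bmatrix}$ and, for $k\ge1$, $A_{2^{k+1}}=\frac{1}{\sqrt{\beta(A_{2^k})^2+1}}\begin{bmatrix}\beta(A_{2^k})A_{2^k} & I_{2^k}\\ \beta(A_{2^k})A_{2^k} & -I_{2^k}\end{bmatrix}$. Then for every $k\ge1$, $A_{2^k}$ is a $2^k\times 2^k$ matrix with rows of Euclidean norm $1$ and $$\beta(A_{2^k})=\sqrt{k+1}=\sqrt{\log_2(n)+1},\quad n=2^k.$$
   Context: For $A\in\mathbb{R}^{m\times n}$, $\beta(A)=\frac{1}{2^n}\sum_{x\in\{-1,1\}^n}\|Ax\|_\infty$. $I_N$ is the $N\times N$ identity matrix. *)

theory Defs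
  imports "HOL-Analysis.Analysis" "Jordan_Normal_Form.Matrix"
begin

definition sign_vecs :: "nat \<Rightarrow> real vec set" where
  "sign_vecs n = {x. x \<in> carrier_vec n \<and> (\<forall>i<n. x $ i = 1 \<or> x $ i = -1)}"

definition inf_norm_vec :: "real vec \<Rightarrow> real" where
  "inf_norm_vec v = Max {\<bar>v $ i\<bar> | i. i < dim_vec v}"

definition beta :: "real mat \<Rightarrow> real" where
  "beta A = (1 / 2 ^ dim_col A) * (\<Sum>x\<in>sign_vecs (dim_col A). inf_norm_vec (A *\<^sub>v x))"

definition A2 :: "real mat" where
  "A2 = (1 / sqrt 2) \<cdot>\<^sub>m mat 2 2 (\<lambda>(i, j). if i = 1 \<and> j = 1 then -1 else 1)"

text \<open>Amat k is the matrix A_{2^k} (for k >= 1); Amat 0 is an unused dummy.\<close>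
fun Amat :: "nat \<Rightarrow> real mat" where
  "Amat 0 = A2"
| "Amat (Suc 0) = A2"
| "Amat (Suc (Suc k)) =
     (let B = Amat (Suc k); b = beta B; N = 2 ^ Suc k in
      (1 / sqrt (b\<^sup>2 + 1)) \<cdot>\<^sub>m
        four_block_mat (b \<cdot>\<^sub>m B) (1\<^sub>m N) (b \<cdot>\<^sub>m B) (- 1\<^sub>m N))"

end

theory Submission
  imports Defs
begin

text \<open>
  Write the recursion as \<open>A' = c \<cdot> D\<close> with \<open>D = [[b A, I], [b A, -I]]\<close>, \<open>b = \<beta>(A)\<close> and
  \<open>c = 1 / sqrt (b\<^sup>2 + 1)\<close>. A sign vector of twice the length splits as \<open>(y, z)\<close>, and
  \<open>D (y, z) = (w + z, w - z)\<close> with \<open>w = b A y\<close>. Since every \<open>z\<^sub>i = \<plusminus>1\<close>,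
  \<open>max (\<bar>w\<^sub>i + z\<^sub>i\<bar>, \<bar>w\<^sub>i - z\<^sub>i\<bar>) = \<bar>w\<^sub>i\<bar> + 1\<close>, so \<open>\<parallel>D (y, z)\<parallel>\<^sub>\<infinity> = b \<parallel>A y\<parallel>\<^sub>\<infinity> + 1\<close> independently
  of \<open>z\<close>; averaging gives \<open>\<beta>(A') = c (b \<beta>(A) + 1) = sqrt (b\<^sup>2 + 1)\<close>. Each row of \<open>D\<close> is a
  scaled row of \<open>A\<close> followed by \<open>\<plusminus>\<close> a unit vector, so unit rows are preserved as well.
\<close>

lemma sign_vecs_eq_image:
  "sign_vecs n = (\<lambda>f. vec n f) ` (PiE {..<n} (\<lambda>_. {-1, 1}))"
proof (intro equalityI subsetI)
  fix x assume x: "x \<in> sign_vecs n"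
  let ?f = "\<lambda>i. if i < n then x $ i else undefined"
  have "x = vec n ?f" using x by (intro eq_vecI) (simp_all add: sign_vecs_def)
  moreover have "?f \<in> PiE {..<n} (\<lambda>_. {-1, 1})"
    using x by (auto simp: sign_vecs_def PiE_iff extensional_def)
  ultimately show "x \<in> (\<lambda>f. vec n f) ` (PiE {..<n} (\<lambda>_. {-1, 1}))" by blast
next
  fix x assume "x \<in> (\<lambda>f. vec n f) ` (PiE {..<n} (\<lambda>_. {-1, 1::real}))"
  then obtain f where "x = vec n f" and "f \<in> PiE {..<n} (\<lambda>_. {-1, 1::real})"
    by auto
  then show "x \<in> sign_vecs n"
    by (auto simp: sign_vecs_def dest: PiE_mem)
qed

lemma card_sign_vecs: "card (sign_vecs n) = 2 ^ n"
proof -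
  have "inj_on (\<lambda>f. vec n f) (PiE {..<n} (\<lambda>_. {-1, 1::real}))"
  proof (intro inj_onI PiE_ext)
    fix f g i assume "vec n f = vec n g" and "i \<in> {..<n}"
    then show "f i = g i" by (metis index_vec lessThan_iff)
  qed
  then show ?thesis
    by (simp add: sign_vecs_eq_image card_image card_PiE numeral_2_eq_2)
qed

lemma append_vec_in_sign_vecs:
  assumes y: "y \<in> sign_vecs m" and z: "z \<in> sign_vecs n"
  shows "y @\<^sub>v z \<in> sign_vecs (m + n)"
proof -
  have carrier: "y \<in> carrier_vec m" "z \<in> carrier_vec n"
    and ys: "\<forall>i<m. y $ i = 1 \<or> y $ i = -1" and zs: "\<forall>i<n. z $ i = 1 \<or> z $ i = -1"
    using y z by (auto simp: sign_vecs_def)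
  have "(y @\<^sub>v z) $ i = 1 \<or> (y @\<^sub>v z) $ i = -1" if i: "i < m + n" for i
  proof (cases "i < m")
    case True
    then show ?thesis using ys carrier by simp
  next
    case False
    then have "i - m < n" using i by linarith
    then show ?thesis using zs carrier False by simp
  qed
  then show ?thesis using carrier by (simp add: sign_vecs_def)
qed

lemma sign_vecs_add:
  "sign_vecs (m + n) = (\<lambda>(y, z). y @\<^sub>v z) ` (sign_vecs m \<times> sign_vecs n)"
proof (intro equalityI subsetI)
  fix x assume x: "x \<in> sign_vecs (m + n)"
  then have "\<And>i. i < m + n \<Longrightarrow> x $ i = 1 \<or> x $ i = -1" "dim_vec x = m + n"
    by (auto simp: sign_vecs_def)
  then have "vec_first x m \<in> sign_vecs m" "vec_last x n \<in> sign_vecs n"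
    by (simp_all add: sign_vecs_def vec_first_def vec_last_def)
  moreover have "vec_first x m @\<^sub>v vec_last x n = x"
    using x by (simp add: sign_vecs_def)
  ultimately show "x \<in> (\<lambda>(y, z). y @\<^sub>v z) ` (sign_vecs m \<times> sign_vecs n)"
    by (intro image_eqI[where x = "(vec_first x m, vec_last x n)"]) simp_all
qed (auto intro: append_vec_in_sign_vecs)

lemma sum_sign_vecs_add:
  "(\<Sum>x\<in>sign_vecs (m + n). f x) = (\<Sum>y\<in>sign_vecs m. \<Sum>z\<in>sign_vecs n. f (y @\<^sub>v z))"
proof -
  have inj: "inj_on (\<lambda>(y, z). y @\<^sub>v z) (sign_vecs m \<times> sign_vecs n)"
  proof (intro inj_onI, clarify)
    fix y z y' z' assume "y \<in> sign_vecs m" "y' \<in> sign_vecs m" "y @\<^sub>v z = y' @\<^sub>v z'"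
    then show "y = y' \<and> z = z'" using append_vec_eq[of y m y'] by (simp add: sign_vecs_def)
  qed
  show ?thesis
    unfolding sign_vecs_add sum.reindex[OF inj] sum.cartesian_product by (simp add: split_def)
qed

lemma abs_le_inf_norm_vec:
  fixes v :: "real vec"
  shows "i < dim_vec v \<Longrightarrow> \<bar>v $ i\<bar> \<le> inf_norm_vec v"
  unfolding inf_norm_vec_def by (rule Max_ge) auto

lemma inf_norm_vec_attained:
  fixes v :: "real vec"
  assumes "dim_vec v > 0"
  obtains j where "j < dim_vec v" "\<bar>v $ j\<bar> = inf_norm_vec v"
proof -
  have "finite {\<bar>v $ i\<bar> | i. i < dim_vec v}" by simp
  moreover have "{\<bar>v $ i\<bar> | i. i < dim_vec v} \<noteq> {}" using assms by auto
  ultimately have "inf_norm_vec v \<in> {\<bar>v $ i\<bar> | i. i < dim_vec v}"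
    unfolding inf_norm_vec_def by (rule Max_in)
  then show ?thesis using that by auto
qed

lemma inf_norm_vec_eqI:
  fixes v :: "real vec"
  assumes "\<And>i. i < dim_vec v \<Longrightarrow> \<bar>v $ i\<bar> \<le> m" and "j < dim_vec v" and "\<bar>v $ j\<bar> = m"
  shows "inf_norm_vec v = m"
proof -
  have "m \<in> {\<bar>v $ i\<bar> | i. i < dim_vec v}" using assms(2,3) by auto
  then show ?thesis
    unfolding inf_norm_vec_def using assms(1) by (intro Max_eqI) auto
qed

lemma inf_norm_vec_smult:
  fixes v :: "real vec"
  assumes "dim_vec v > 0"
  shows "inf_norm_vec (c \<cdot>\<^sub>v v) = \<bar>c\<bar> * inf_norm_vec v"
proof -
  obtain j where j: "j < dim_vec v" "\<bar>v $ j\<bar> = inf_norm_vec v"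
    using inf_norm_vec_attained assms by blast
  show ?thesis
  proof (rule inf_norm_vec_eqI)
    fix i assume "i < dim_vec (c \<cdot>\<^sub>v v)"
    then show "\<bar>(c \<cdot>\<^sub>v v) $ i\<bar> \<le> \<bar>c\<bar> * inf_norm_vec v"
      by (simp add: abs_mult mult_left_mono abs_le_inf_norm_vec)
  next
    show "j < dim_vec (c \<cdot>\<^sub>v v)" "\<bar>(c \<cdot>\<^sub>v v) $ j\<bar> = \<bar>c\<bar> * inf_norm_vec v"
      using j by (simp_all add: abs_mult)
  qed
qed

lemma abs_add_sign_eq:
  fixes a s :: real
  assumes "\<bar>s\<bar> = 1" and "a * s \<ge> 0"
  shows "\<bar>a + s\<bar> = \<bar>a\<bar> + 1"
  using assms by (cases "s \<ge> 0") (auto simp: abs_if zero_le_mult_iff)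

lemma inf_norm_vec_append_sign:
  assumes w: "w \<in> carrier_vec n" and "n > 0" and z: "z \<in> sign_vecs n"
  shows "inf_norm_vec ((w + z) @\<^sub>v (w - z)) = inf_norm_vec w + 1"
proof -
  have zc: "z \<in> carrier_vec n" and zs: "\<And>i. i < n \<Longrightarrow> \<bar>z $ i\<bar> = 1"
    using z by (auto simp: sign_vecs_def)
  let ?v = "(w + z) @\<^sub>v (w - z)"
  have dv: "dim_vec ?v = n + n" using w zc by simp
  have low: "?v $ i = w $ i + z $ i" if "i < n" for i
    using that w zc by simp
  have high: "?v $ (n + i) = w $ i + - z $ i" if "i < n" for i
    using that w zc by simp
  have bound: "\<bar>w $ i + s\<bar> \<le> inf_norm_vec w + 1" if "i < n" "\<bar>s\<bar> = 1" for i s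
    using abs_triangle_ineq[of "w $ i" s] abs_le_inf_norm_vec[of i w] that w by simp
  obtain j where j: "j < n" "\<bar>w $ j\<bar> = inf_norm_vec w"
    using inf_norm_vec_attained[of w] w \<open>n > 0\<close> by auto
  \<comment> \<open>whichever of \<open>w\<^sub>j \<plusminus> z\<^sub>j\<close> involves no cancellation attains the bound\<close>
  obtain i where i: "i < n + n" "\<bar>?v $ i\<bar> = inf_norm_vec w + 1"
  proof (cases "w $ j * z $ j \<ge> 0")
    case True
    then show ?thesis
      using that[of j] low[of j] abs_add_sign_eq[of "z $ j" "w $ j"] j zs by auto
  next
    case False
    then show ?thesis
      using that[of "n + j"] high[of j] abs_add_sign_eq[of "- z $ j" "w $ j"] j zs by auto
  qed
  show ?thesis
  proof (rule inf_norm_vec_eqI[OF _ _ i(2)])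
    fix k assume "k < dim_vec ?v"
    then consider "k < n" | l where "l < n" "k = n + l"
      using dv by (metis add_diff_inverse_nat nat_add_left_cancel_less)
    then show "\<bar>?v $ k\<bar> \<le> inf_norm_vec w + 1"
    proof cases
      case 1
      then show ?thesis using low bound zs by simp
    next
      case (2 l)
      then show ?thesis using high[of l] bound[of l "- z $ l"] zs[of l] by simp
    qed
  qed (use i dv in simp)
qed

definition doubling_mat :: "real \<Rightarrow> real mat \<Rightarrow> nat \<Rightarrow> real mat" where
  "doubling_mat b B N = four_block_mat (b \<cdot>\<^sub>m B) (1\<^sub>m N) (b \<cdot>\<^sub>m B) (- 1\<^sub>m N)"

lemma Amat_Suc_Suc:
  "Amat (Suc (Suc k)) =
     (1 / sqrt ((beta (Amat (Suc k)))\<^sup>2 + 1)) \<cdot>\<^sub>m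
       doubling_mat (beta (Amat (Suc k))) (Amat (Suc k)) (2 ^ Suc k)"
  by (simp add: doubling_mat_def Let_def)

lemma doubling_mat_carrier:
  "B \<in> carrier_mat N N \<Longrightarrow> doubling_mat b B N \<in> carrier_mat (N + N) (N + N)"
  by (simp add: doubling_mat_def)

lemma doubling_mat_mult_append_vec:
  assumes B: "B \<in> carrier_mat N N" and y: "y \<in> carrier_vec N" and z: "z \<in> carrier_vec N"
  shows "doubling_mat b B N *\<^sub>v (y @\<^sub>v z)
    = (b \<cdot>\<^sub>v (B *\<^sub>v y) + z) @\<^sub>v (b \<cdot>\<^sub>v (B *\<^sub>v y) - z)"
proof -
  have "doubling_mat b B N *\<^sub>v (y @\<^sub>v z)
      = ((b \<cdot>\<^sub>m B) *\<^sub>v y + 1\<^sub>m N *\<^sub>v z) @\<^sub>v ((b \<cdot>\<^sub>m B) *\<^sub>v y + (- 1\<^sub>m N) *\<^sub>v z)"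
    unfolding doubling_mat_def using B y z by (intro four_block_mat_mult_vec) auto
  moreover have "(b \<cdot>\<^sub>m B) *\<^sub>v y = b \<cdot>\<^sub>v (B *\<^sub>v y)"
    using B y by (intro eq_vecI) auto
  ultimately show ?thesis using z B y by (auto simp: minus_add_uminus_vec)
qed

lemma row_doubling_mat:
  assumes B: "B \<in> carrier_mat N N"
  shows "i < N \<Longrightarrow> row (doubling_mat b B N) i = (b \<cdot>\<^sub>v row B i) @\<^sub>v unit_vec N i"
    and "N \<le> i \<Longrightarrow> i < N + N \<Longrightarrow>
      row (doubling_mat b B N) i = (b \<cdot>\<^sub>v row B (i - N)) @\<^sub>v - unit_vec N (i - N)"
  using B by (auto simp: doubling_mat_def row_four_block_mat[of _ N N _ N _ N])

lemma row_doubling_mat_norm: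
  assumes B: "B \<in> carrier_mat N N" and i: "i < N + N"
  shows "row (doubling_mat b B N) i \<bullet> row (doubling_mat b B N) i
    = b\<^sup>2 * (row B (i mod N) \<bullet> row B (i mod N)) + 1"
proof (cases "i < N")
  case True
  then show ?thesis using B
    by (simp add: row_doubling_mat scalar_prod_append[of _ N _ N] power2_eq_square)
next
  case False
  then have "i mod N = i - N" "i - N < N" using i by (simp_all add: le_mod_geq)
  then show ?thesis using B False i
    by (simp add: row_doubling_mat scalar_prod_append[of _ N _ N] power2_eq_square)
qed

lemma smult_mat_mult_vec:
  fixes A :: "'a :: comm_ring_1 mat"
  shows "dim_vec v = dim_col A \<Longrightarrow> (c \<cdot>\<^sub>m A) *\<^sub>v v = c \<cdot>\<^sub>v (A *\<^sub>v v)"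
  by (intro eq_vecI) auto

lemma beta_smult:
  assumes "dim_row A > 0"
  shows "beta (c \<cdot>\<^sub>m A) = \<bar>c\<bar> * beta A"
proof -
  have "inf_norm_vec ((c \<cdot>\<^sub>m A) *\<^sub>v x) = \<bar>c\<bar> * inf_norm_vec (A *\<^sub>v x)"
    if "x \<in> sign_vecs (dim_col A)" for x
    using that assms by (simp add: sign_vecs_def smult_mat_mult_vec inf_norm_vec_smult)
  then show ?thesis by (simp add: beta_def sum_distrib_left)
qed

lemma beta_doubling_mat:
  assumes B: "B \<in> carrier_mat N N" and "N > 0" and "b \<ge> 0"
  shows "beta (doubling_mat b B N) = b * beta B + 1"
proof -
  let ?M = "doubling_mat b B N" and ?S = "sign_vecs N"
  have norm: "inf_norm_vec (?M *\<^sub>v (y @\<^sub>v z)) = b * inf_norm_vec (B *\<^sub>v y) + 1"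
    if y: "y \<in> ?S" and z: "z \<in> ?S" for y z
  proof -
    have "y \<in> carrier_vec N" "z \<in> carrier_vec N" using y z by (simp_all add: sign_vecs_def)
    then have "inf_norm_vec (?M *\<^sub>v (y @\<^sub>v z)) = inf_norm_vec (b \<cdot>\<^sub>v (B *\<^sub>v y)) + 1"
      using B \<open>N > 0\<close> z
      by (simp add: doubling_mat_mult_append_vec inf_norm_vec_append_sign[of _ N])
    also have "\<dots> = b * inf_norm_vec (B *\<^sub>v y) + 1"
      using B \<open>N > 0\<close> \<open>b \<ge> 0\<close> by (simp add: inf_norm_vec_smult)
    finally show ?thesis .
  qed
  have "(\<Sum>x\<in>sign_vecs (N + N). inf_norm_vec (?M *\<^sub>v x))
      = (\<Sum>y\<in>?S. 2 ^ N * (b * inf_norm_vec (B *\<^sub>v y) + 1))"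
    by (simp add: sum_sign_vecs_add norm card_sign_vecs)
  also have "\<dots> = 2 ^ N * (b * (\<Sum>y\<in>?S. inf_norm_vec (B *\<^sub>v y)) + 2 ^ N)"
    by (simp add: sum.distrib sum_distrib_left card_sign_vecs algebra_simps)
  finally show ?thesis
    using B doubling_mat_carrier[OF B, of b] by (simp add: beta_def power_add field_simps)
qed

lemma A2_carrier: "A2 \<in> carrier_mat 2 2"
  by (simp add: A2_def)

lemma A2_unit_rows: "i < 2 \<Longrightarrow> row A2 i \<bullet> row A2 i = 1"
  by (auto simp: A2_def scalar_prod_def numeral_2_eq_2 row_def less_Suc_eq)

lemma inf_norm_A2_mult_sign_vec:
  assumes x: "x \<in> sign_vecs 2"
  shows "inf_norm_vec (A2 *\<^sub>v x) = sqrt 2"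
proof -
  have xc: "x \<in> carrier_vec 2" and x0: "x $ 0 = 1 \<or> x $ 0 = -1" and x1: "x $ 1 = 1 \<or> x $ 1 = -1"
    using x by (auto simp: sign_vecs_def)
  let ?v = "A2 *\<^sub>v x"
  have v0: "?v $ 0 = (x $ 0 + x $ 1) / sqrt 2" using xc
    by (simp add: A2_def scalar_prod_def numeral_2_eq_2 row_def field_simps)
  have v1: "?v $ 1 = (x $ 0 - x $ 1) / sqrt 2" using xc
    by (simp add: A2_def scalar_prod_def numeral_2_eq_2 row_def field_simps)
  have "dim_vec ?v = 2" by (simp add: A2_def)
  then have "{\<bar>?v $ i\<bar> | i. i < dim_vec ?v} = {\<bar>?v $ 0\<bar>, \<bar>?v $ 1\<bar>}"
    using less_2_cases by fastforce
  moreover have "2 / sqrt 2 = sqrt 2"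
    by (simp add: real_div_sqrt)
  ultimately show ?thesis unfolding inf_norm_vec_def v0 v1 using x0 x1 by auto
qed

lemma beta_A2: "beta A2 = sqrt 2"
  using inf_norm_A2_mult_sign_vec card_sign_vecs[of 2]
  by (simp add: beta_def A2_def)

lemma Amat_Suc_carrier_rows_beta:
  "Amat (Suc n) \<in> carrier_mat (2 ^ Suc n) (2 ^ Suc n)
    \<and> (\<forall>i < 2 ^ Suc n. row (Amat (Suc n)) i \<bullet> row (Amat (Suc n)) i = 1)
    \<and> beta (Amat (Suc n)) = sqrt (real n + 2)"
proof (induction n)
  case 0
  show ?case using A2_carrier A2_unit_rows beta_A2 by simp
next
  case (Suc n)
  define N :: nat where "N = 2 ^ Suc n"
  define B where "B = Amat (Suc n)"
  define b where "b = beta B"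
  define M where "M = doubling_mat b B N"
  have B: "B \<in> carrier_mat N N" and rows: "\<And>j. j < N \<Longrightarrow> row B j \<bullet> row B j = 1"
    and b: "b = sqrt (real n + 2)"
    using Suc.IH unfolding N_def B_def b_def by auto
  have "b\<^sup>2 + 1 = real (Suc n) + 2" using b by simp
  then have A: "Amat (Suc (Suc n)) = (1 / sqrt (real (Suc n) + 2)) \<cdot>\<^sub>m M"
    using Amat_Suc_Suc[of n] unfolding M_def N_def B_def b_def by simp
  have M: "M \<in> carrier_mat (N + N) (N + N)"
    unfolding M_def using doubling_mat_carrier[OF B] .
  have "N > 0" unfolding N_def by simp
  have "row M i \<bullet> row M i = real (Suc n) + 2" if "i < N + N" for i
    using row_doubling_mat_norm[OF B that] rows[of "i mod N"] \<open>N > 0\<close> \<open>b\<^sup>2 + 1 = _\<close>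
    unfolding M_def by simp
  moreover have "beta M = real (Suc n) + 2"
  proof -
    have "b \<ge> 0" using b by simp
    then have "beta M = b * b + 1"
      using beta_doubling_mat[OF B \<open>N > 0\<close>] unfolding M_def b_def by simp
    then show ?thesis using b by simp
  qed
  moreover have "2 ^ Suc (Suc n) = N + N" unfolding N_def by simp
  ultimately show ?case
    using M \<open>N > 0\<close> unfolding A by (simp add: beta_smult power_divide real_div_sqrt)
qed

theorem corollary4:
  fixes k :: nat
  assumes "k \<ge> 1"
  shows "Amat k \<in> carrier_mat (2 ^ k) (2 ^ k)
    \<and> (\<forall>i < 2 ^ k. sqrt (row (Amat k) i \<bullet> row (Amat k) i) = 1)
    \<and> beta (Amat k) = sqrt (real k + 1)
    \<and> beta (Amat k) = sqrt (log 2 (real (2 ^ k)) + 1)"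
proof -
  obtain n where k: "k = Suc n" using assms by (cases k) auto
  have "log 2 (real (2 ^ k)) = real k" by simp
  then show ?thesis using Amat_Suc_carrier_rows_beta[of n] unfolding k by simp
qed

end
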